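(* Under the standing setup (in particular $d\ge 2$ and $\ker B=\{0\}$), let $(v^k)_{k\ge0}$ be the random sequence generated by Algorithm U. Then, almost surely, the sequence $\bigl(f(v^k)\bigr)_{k\ge0}=\bigl(\|Av^k\|^2/\|Bv^k\|^2\bigr)_{k\ge0}$ is nondecreasing and converges to $\lambda_1$, and $\operatorname{dist}(G_{\lambda_1},v^k)\to 0$ as $k\to\infty$.
   Context: Standing setup. Let $d\ge 2$, $A\in\mathbb R^{m\times d}$, $B\in\mathbb R^{\ell\times d}$ with $\ker B=\{0\}$, so $B^TB$ is symmetric positive definite. $\mathbb S^{d-1}$ is the Euclidean unit sphere of $\mathbb R^d$ and $\mathcal U(\mathbb S^{d-1})$ the uniform (normalized surface) probability measure on it. Define $f(v)=\|Av\|^2/\|Bv\|^2$ for $v\neq0$. A generalized eigenvector of $(A^TA,B^TB)$ is a vector $v\neq 0$ with $A^TAv=\lambda B^TBv$ for some $\lambda\in\mathbb R$ (a generalized eigenvalue); the generalized eigenvalues are exactly the eigenvalues of the symmetric matrix $K=(B^TB)^{-1/2}A^TA(B^TB)^{-1/2}$, listed with multiplicity as $\lambda_1\ge\lambda_2\ge\dots\ge\lambda_d$. For a generalized eigenvalue $\lambda$ let $G_\lambda=\{v\in\mathbb R^d\setminus\{0\}: A^TAv=\lambda B^TBv\}$, and $\dim G_\lambda$ denotes the dimension of the linear subspace $G_\lambda\cup\{0\}$. For a set $G$ and a point $y$, $\operatorname{dist}(G,y)=\inf_{u\in G}\|y-u\|$. Algorithm U. Let $g\sim\mathcal N(0,I_d)$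 and $v^0=g/\|g\|$; let $x^0,x^1,x^2,\dots$ be i.i.d. with law $\mathcal U(\mathbb S^{d-1})$, independent of $g$. Given $v^k\in\mathbb S^{d-1}$, set $s_k(\tau)=f(v^k+\tau x^k)$ for $\tau\in\mathbb R$ with $v^k+\tau x^k\neq0$; let $\tau_k$ be a (measurably chosen) maximizer of $s_k$ over $\tau\in\mathbb R$, with $\tau_k=0$ if no maximizer exists, and set $v^{k+1}=(v^k+\tau_kx^k)/\|v^k+\tau_kx^k\|$. *)

theory Defs
  imports "HOL-Probability.Probability"
begin

definition rq :: "real^'n^'m \<Rightarrow> real^'n^'l \<Rightarrow> real^'n \<Rightarrow> real" where
  "rq A B v = (norm (A *v v))\<^sup>2 / (norm (B *v v))\<^sup>2"

definition geneig_space :: "real^'n^'m \<Rightarrow> real^'n^'l \<Rightarrow> real \<Rightarrow> (real^'n) set" where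
  "geneig_space A B c =
     {v. v \<noteq> 0 \<and> (transpose A ** A) *v v = c *\<^sub>R ((transpose B ** B) *v v)}"

definition geneigs :: "real^'n^'m \<Rightarrow> real^'n^'l \<Rightarrow> real set" where
  "geneigs A B = {c. geneig_space A B c \<noteq> {}}"

definition lambda1 :: "real^'n^'m \<Rightarrow> real^'n^'l \<Rightarrow> real" where
  "lambda1 A B = Max (geneigs A B)"

definition std_gaussian :: "(real^'n) measure" where
  "std_gaussian = density lborel
     (\<lambda>x. ennreal ((2 * pi) powr (- real CARD('n) / 2) * exp (- (norm x)\<^sup>2 / 2)))"

text \<open>Normalized uniform (surface) measure on the unit sphere, given via the
  cone-measure description: sigma(E) = lambda(cone(E) \<inter> ball)/lambda(ball),
  i.e. the image of the uniform distribution on the unit ball under x \<mapsto> x/|x|.\<close>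
definition uniform_sphere :: "(real^'n) measure" where
  "uniform_sphere = distr (uniform_measure lborel (ball 0 1)) borel (\<lambda>x. x /\<^sub>R norm x)"

definition is_line_max :: "real^'n^'m \<Rightarrow> real^'n^'l \<Rightarrow> real^'n \<Rightarrow> real^'n \<Rightarrow> real \<Rightarrow> bool" where
  "is_line_max A B v x t \<longleftrightarrow> v + t *\<^sub>R x \<noteq> 0 \<and>
     (\<forall>s. v + s *\<^sub>R x \<noteq> 0 \<longrightarrow> rq A B (v + s *\<^sub>R x) \<le> rq A B (v + t *\<^sub>R x))"

end

theory Submission
  imports Defs
begin

text \<open>
  The quotient f never decreases along the iteration (\<open>\<tau> = 0\<close> is admissible) and never
  exceeds \<open>\<lambda>\<^sub>1 = max f\<close>, whose maximizers are exactly the vectors of \<open>G\<^sub>\<lambda>\<^sub>1\<close>.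
  Up to the positive factor \<open>2 / \<parallel>B y\<parallel>\<^sup>2\<close>, the inner product of the residual
  \<open>r(y) = A\<^sup>TA y - f(y) B\<^sup>TB y\<close> with w is the derivative of f at y in direction w.
  If \<open>r(x) \<bullet> w \<noteq> 0\<close> for the current iterate w and the new direction x, the line search
  has a maximizer, and its value is at least f(x).

  Fix \<open>c < \<lambda>\<^sub>1\<close>. Unless f is constant, there are unit vectors \<open>Y\<^sub>1, \<dots>, Y\<^sub>K\<close> with
  \<open>f(Y\<^sub>i) > c\<close> whose residuals have trivial orthogonal complement, and this persists for
  all \<open>z\<^sub>i\<close> close to \<open>Y\<^sub>i\<close>. By independence, almost surely some block of K consecutive
  directions comes close to \<open>Y\<^sub>1, \<dots>, Y\<^sub>K\<close>. During such a block either f rises above c,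
  or no step moves the iterate w, so that w is orthogonal to all residuals of the block and
  hence zero. Thus \<open>f(v\<^sup>k) \<rightarrow> \<lambda>\<^sub>1\<close>, and by compactness of the sphere \<open>v\<^sup>k\<close>
  approaches \<open>G\<^sub>\<lambda>\<^sub>1\<close>.
\<close>

section \<open>The generalized Rayleigh quotient\<close>

lemma ex_quadratic_pos:
  fixes r K :: real
  assumes "r \<noteq> 0"
  shows "\<exists>s. 0 < 2 * r * s + K * s\<^sup>2"
proof -
  define a where "a = \<bar>K\<bar> + 1"
  have a: "0 < a" "- 1 < K / a"
    by (simp_all add: a_def field_simps)
  have "2 * r * (r / a) + K * (r / a)\<^sup>2 = r\<^sup>2 / a * (2 + K / a)"
    using a by (simp add: field_simps power2_eq_square)
  also have "\<dots> > 0"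
    using assms a by (intro mult_pos_pos) auto
  finally show ?thesis
    by blast
qed

lemma gram_inner: "((transpose A ** A) *v y) \<bullet> z = (A *v y) \<bullet> (A *v z)"
  for A :: "real^'n^'m"
  by (simp add: matrix_vector_mul_assoc[symmetric] dot_lmul_matrix)

lemma tendsto_matrix_vector_mult_line: "((\<lambda>t. (C :: real^'n^'k) *v (e + t *\<^sub>R h)) \<longlongrightarrow> C *v e) (at 0)"
proof -
  have "((\<lambda>t. C *v e + t *\<^sub>R (C *v h)) \<longlongrightarrow> C *v e + 0 *\<^sub>R (C *v h)) (at 0)"
    by (intro tendsto_intros)
  then show ?thesis
    by (simp add: matrix_vector_right_distrib matrix_vector_mult_scaleR)
qed

lemma rq_scaleR: "c \<noteq> 0 \<Longrightarrow> rq A B (c *\<^sub>R v) = rq A B v"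
  by (simp add: rq_def matrix_vector_mult_scaleR power_mult_distrib)

lemma rq_nonneg: "0 \<le> rq A B v"
  by (simp add: rq_def)

lemma rq_zero [simp]: "rq A B 0 = 0"
  by (simp add: rq_def)

locale rayleigh =
  fixes A :: "real^'n^'m" and B :: "real^'n^'l"
  assumes ker_B: "\<forall>u. B *v u = 0 \<longrightarrow> u = 0"
begin

abbreviation f :: "real^'n \<Rightarrow> real" where
  "f \<equiv> rq A B"

lemma mult_B_nonzero: "v \<noteq> 0 \<Longrightarrow> B *v v \<noteq> 0"
  using ker_B by auto

lemma norm_A_sq: "(norm (A *v v))\<^sup>2 = f v * (norm (B *v v))\<^sup>2"
  by (cases "v = 0") (simp_all add: rq_def mult_B_nonzero)

lemma isCont_rq: "v \<noteq> 0 \<Longrightarrow> isCont f v"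
  unfolding rq_def[abs_def]
  by (intro continuous_intros linear_continuous_at matrix_vector_mul_bounded_linear)
     (simp add: mult_B_nonzero)

definition pencil_form :: "real \<Rightarrow> real^'n \<Rightarrow> real^'n \<Rightarrow> real" where
  "pencil_form c y z = (A *v y) \<bullet> (A *v z) - c * ((B *v y) \<bullet> (B *v z))"

definition residual :: "real^'n \<Rightarrow> real^'n" where
  "residual y = (transpose A ** A) *v y - f y *\<^sub>R ((transpose B ** B) *v y)"

lemma residual_inner: "residual y \<bullet> z = pencil_form (f y) y z"
  by (simp add: residual_def pencil_form_def inner_diff_left gram_inner)

lemma residual_scaleR: "c \<noteq> 0 \<Longrightarrow> residual (c *\<^sub>R y) = c *\<^sub>R residual y"
  by (simp add: residual_def rq_scaleR matrix_vector_mult_scaleR algebra_simps)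

lemma residual_zero [simp]: "residual 0 = 0"
  by (simp add: residual_def)

lemma isCont_residual: "y \<noteq> 0 \<Longrightarrow> isCont residual y"
  unfolding residual_def[abs_def]
  by (intro continuous_intros linear_continuous_at matrix_vector_mul_bounded_linear isCont_rq)

lemma pencil_form_commute: "pencil_form c y z = pencil_form c z y"
  by (simp add: pencil_form_def inner_commute)

lemma pencil_form_add_scaleR: "pencil_form c (y + t *\<^sub>R h) z = pencil_form c y z + t * pencil_form c h z"
  by (simp add: pencil_form_def matrix_vector_right_distrib matrix_vector_mult_scaleR
      inner_add_left algebra_simps)

lemma pencil_form_quadratic:
  "pencil_form c (y + t *\<^sub>R h) (y + t *\<^sub>R h) =
     pencil_form c y y + 2 * t * pencil_form c y h + t\<^sup>2 * pencil_form c h h"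
  by (simp add: pencil_form_add_scaleR pencil_form_commute[of c _ "y + t *\<^sub>R h"]
      pencil_form_commute[of c h y] power2_eq_square algebra_simps)

lemma pencil_form_diag: "pencil_form c y y = (f y - c) * (norm (B *v y))\<^sup>2"
  by (simp add: pencil_form_def dot_square_norm norm_A_sq algebra_simps)

lemma pencil_form_diag_pos_iff: "0 < pencil_form c y y \<longleftrightarrow> y \<noteq> 0 \<and> c < f y"
  by (cases "y = 0") (auto simp: pencil_form_diag zero_less_mult_iff mult_B_nonzero)

lemma pencil_form_change: "pencil_form c y z = pencil_form d y z + (d - c) * ((B *v y) \<bullet> (B *v z))"
  by (simp add: pencil_form_def algebra_simps)

lemma geneig_space_iff: "e \<in> geneig_space A B c \<longleftrightarrow> e \<noteq> 0 \<and> (\<forall>z. pencil_form c e z = 0)"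
proof -
  define r where "r = (transpose A ** A) *v e - c *\<^sub>R ((transpose B ** B) *v e)"
  have "r \<bullet> z = pencil_form c e z" for z
    by (simp add: r_def pencil_form_def inner_diff_left gram_inner)
  moreover have "r = 0 \<longleftrightarrow> (\<forall>z. r \<bullet> z = 0)"
    by (metis inner_eq_zero_iff inner_zero_left)
  ultimately show ?thesis
    by (simp add: geneig_space_def r_def)
qed

lemma rq_increase:
  assumes "residual x \<bullet> w \<noteq> 0"
  shows "\<exists>s. f x < f (x + s *\<^sub>R w)"
proof -
  obtain s where s: "0 < 2 * (residual x \<bullet> w) * s + pencil_form (f x) w w * s\<^sup>2"
    using ex_quadratic_pos[OF assms] by blast
  have "pencil_form (f x) (x + s *\<^sub>R w) (x + s *\<^sub>R w) =
      2 * (residual x \<bullet> w) * s + pencil_form (f x) w w * s\<^sup>2"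
    unfolding pencil_form_quadratic residual_inner by (simp add: pencil_form_diag[of "f x" x])
  with s show ?thesis
    by (metis pencil_form_diag_pos_iff)
qed

lemma geneig_space_if_max:
  assumes "u \<noteq> 0" and "\<And>v. f v \<le> f u"
  shows "u \<in> geneig_space A B (f u)"
  using assms rq_increase unfolding geneig_space_iff residual_inner[symmetric]
  by (metis not_less)

lemma rq_geneig: "e \<in> geneig_space A B c \<Longrightarrow> f e = c"
  using pencil_form_diag[of c e] mult_B_nonzero[of e] by (simp add: geneig_space_iff)

lemma finite_geneigs: "finite (geneigs A B)"
proof -
  have "\<forall>c\<in>geneigs A B. \<exists>e. e \<in> geneig_space A B c"
    by (auto simp: geneigs_def)
  then obtain e where e: "\<And>c. c \<in> geneigs A B \<Longrightarrow> e c \<in> geneig_space A B c"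
    by metis
  have orth: "(B *v e c) \<bullet> (B *v e c') = 0"
    if "c \<in> geneigs A B" "c' \<in> geneigs A B" "c \<noteq> c'" for c c'
  proof -
    have "pencil_form c (e c) (e c') = 0" "pencil_form c' (e c') (e c) = 0"
      using e that by (simp_all add: geneig_space_iff)
    then show ?thesis
      using pencil_form_change[of c "e c" "e c'" c'] pencil_form_commute[of c' "e c"] that(3)
      by simp
  qed
  have nonzero: "B *v e c \<noteq> 0" if "c \<in> geneigs A B" for c
    using e[OF that] mult_B_nonzero by (auto simp: geneig_space_iff)
  have "inj_on (\<lambda>c. B *v e c) (geneigs A B)"
    by (rule inj_onI) (metis orth nonzero inner_eq_zero_iff)
  moreover have "independent ((\<lambda>c. B *v e c) ` geneigs A B)"
    by (rule pairwise_orthogonal_independent)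
       (use orth nonzero in \<open>auto simp: pairwise_def orthogonal_def\<close>)
  then have "finite ((\<lambda>c. B *v e c) ` geneigs A B)"
    by (rule eucl.finiteI_independent)
  ultimately show ?thesis
    using finite_imageD by blast
qed

lemma rq_attains_max: "\<exists>e. e \<noteq> 0 \<and> (\<forall>v. f v \<le> f e)"
proof -
  have "continuous_on (sphere 0 1) f"
    by (intro continuous_at_imp_continuous_on ballI isCont_rq) auto
  moreover have "sphere (0::real^'n) 1 \<noteq> {}"
    by (simp add: sphere_eq_empty)
  ultimately obtain e where e: "e \<in> sphere 0 1" and max: "\<And>y. y \<in> sphere 0 1 \<Longrightarrow> f y \<le> f e"
    using continuous_attains_sup[OF compact_sphere] by blast
  have "f v \<le> f e" for v
  proof (cases "v = 0")
    case False
    then have "f v = f (v /\<^sub>R norm v)"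
      by (simp add: rq_scaleR)
    also have "\<dots> \<le> f e"
      using False by (intro max) simp
    finally show ?thesis .
  qed (simp add: rq_nonneg)
  with e show ?thesis
    by (intro exI[of _ e]) auto
qed

lemma lambda1_eq_max:
  assumes "e \<noteq> 0" and "\<And>v. f v \<le> f e"
  shows "lambda1 A B = f e"
  unfolding lambda1_def
proof (rule Max_eqI[OF finite_geneigs])
  show "f e \<in> geneigs A B"
    using geneig_space_if_max[OF assms] by (auto simp: geneigs_def)
  show "c \<le> f e" if "c \<in> geneigs A B" for c
    using that assms(2) rq_geneig by (auto simp: geneigs_def)
qed

lemma rq_le_lambda1: "f v \<le> lambda1 A B"
  using rq_attains_max lambda1_eq_max by metis

lemma geneig_lambda1_iff: "u \<in> geneig_space A B (lambda1 A B) \<longleftrightarrow> u \<noteq> 0 \<and> f u = lambda1 A B"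
  using rq_geneig geneig_space_if_max rq_le_lambda1
  by (metis geneig_space_iff)

lemma ex_geneig_lambda1: "\<exists>e. e \<in> geneig_space A B (lambda1 A B)"
  using rq_attains_max lambda1_eq_max geneig_lambda1_iff by metis

lemma infdist_geneig_lambda1_small:
  assumes "0 < \<epsilon>"
  obtains \<delta> where "0 < \<delta>"
    and "\<And>y. norm y = 1 \<Longrightarrow> lambda1 A B - \<delta> < f y \<Longrightarrow>
           infdist y (geneig_space A B (lambda1 A B)) < \<epsilon>"
proof -
  define G where "G = geneig_space A B (lambda1 A B)"
  define S where "S = sphere 0 1 \<inter> {y. \<epsilon> \<le> infdist y G}"
  have "compact S"
    unfolding S_def by (intro compact_Int_closed compact_sphere closed_Collect_le continuous_intros)
  show ?thesis
  proof (cases "S = {}")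
    case True
    then show ?thesis
      by (intro that[of 1]) (auto simp: S_def G_def not_le)
  next
    case False
    have "continuous_on S (\<lambda>y. lambda1 A B - f y)"
      by (intro continuous_intros continuous_at_imp_continuous_on ballI isCont_rq) (auto simp: S_def)
    then obtain y0 where "y0 \<in> S" and min: "\<And>y. y \<in> S \<Longrightarrow> lambda1 A B - f y0 \<le> lambda1 A B - f y"
      using continuous_attains_inf[OF \<open>compact S\<close> False] by blast
    have "f y0 \<noteq> lambda1 A B"
    proof
      assume "f y0 = lambda1 A B"
      then have "y0 \<in> G"
        using \<open>y0 \<in> S\<close> by (auto simp: S_def G_def geneig_lambda1_iff)
      then show False
        using \<open>y0 \<in> S\<close> \<open>0 < \<epsilon>\<close> by (simp add: S_def)
    qed
    then have "0 < lambda1 A B - f y0"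
      using rq_le_lambda1[of y0] by simp
    then show ?thesis
    proof (rule that)
      fix y :: "real^'n"
      assume "norm y = 1" and "lambda1 A B - (lambda1 A B - f y0) < f y"
      then show "infdist y (geneig_space A B (lambda1 A B)) < \<epsilon>"
        using min[of y] by (force simp: S_def G_def)
    qed
  qed
qed

lemma tendsto_infdist_geneig_lambda1:
  assumes "\<And>k. norm (u k) = 1" and "(\<lambda>k. f (u k)) \<longlonglongrightarrow> lambda1 A B"
  shows "(\<lambda>k. infdist (u k) (geneig_space A B (lambda1 A B))) \<longlonglongrightarrow> 0"
proof (rule order_tendstoI)
  show "\<forall>\<^sub>F k in sequentially. a < infdist (u k) (geneig_space A B (lambda1 A B))" if "a < 0" for a
    using that by (intro always_eventually allI) (meson infdist_nonneg less_le_trans)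
  fix \<epsilon> :: real
  assume "0 < \<epsilon>"
  then obtain \<delta> where "0 < \<delta>" and \<delta>: "\<And>y. norm y = 1 \<Longrightarrow> lambda1 A B - \<delta> < f y \<Longrightarrow>
      infdist y (geneig_space A B (lambda1 A B)) < \<epsilon>"
    using infdist_geneig_lambda1_small by blast
  have "\<forall>\<^sub>F k in sequentially. lambda1 A B - \<delta> < f (u k)"
    using \<open>0 < \<delta>\<close> by (intro order_tendstoD(1)[OF assms(2)]) simp
  then show "\<forall>\<^sub>F k in sequentially. infdist (u k) (geneig_space A B (lambda1 A B)) < \<epsilon>"
    by eventually_elim (use assms(1) \<delta> in blast)
qed

section \<open>Exact line search\<close>

lemma independent_if_residual_inner:
  assumes r: "residual x \<bullet> w \<noteq> 0" and comb: "a *\<^sub>R w + b *\<^sub>R x = 0"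
  shows "a = 0 \<and> b = 0"
proof -
  have x: "x \<noteq> 0"
    using r by auto
  have self: "residual x \<bullet> x = 0"
    by (simp add: residual_inner pencil_form_diag)
  show ?thesis
  proof (cases "a = 0")
    case True
    then show ?thesis
      using comb x by simp
  next
    case False
    have "w = inverse a *\<^sub>R (a *\<^sub>R w)"
      using False by simp
    also have "a *\<^sub>R w = - (b *\<^sub>R x)"
      using comb by (simp add: eq_neg_iff_add_eq_0)
    finally have "w = (- b / a) *\<^sub>R x"
      by (simp add: divide_inverse mult.commute)
    then show ?thesis
      using r self by simp
  qed
qed

lemma line_max_exists:
  assumes r: "residual x \<bullet> w \<noteq> 0"
  shows "\<exists>t. is_line_max A B w x t"
proof -
  obtain s where s: "f x < f (x + s *\<^sub>R w)"
    using rq_increase[OF r] by blast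
  txt \<open>Every point of the line \<open>w + t x\<close> is a positive multiple of a point of the compact
    ellipse z; the maximum of f on z is not attained at \<open>\<plusminus>x\<close>, by the choice of s.\<close>
  define z where "z \<theta> = cos \<theta> *\<^sub>R w + sin \<theta> *\<^sub>R x" for \<theta>
  have z_nonzero: "z \<theta> \<noteq> 0" for \<theta>
  proof
    assume "z \<theta> = 0"
    then have "cos \<theta> = 0 \<and> sin \<theta> = 0"
      using independent_if_residual_inner[OF r] by (simp add: z_def)
    then show False
      using sin_cos_squared_add[of \<theta>] by simp
  qed
  have "continuous_on {-pi..pi} (\<lambda>\<theta>. f (z \<theta>))"
    unfolding z_def
    by (intro continuous_at_imp_continuous_on ballI continuous_intros isCont_o2[OF _ isCont_rq]
        z_nonzero[unfolded z_def])
  then obtain \<theta>0 where "\<theta>0 \<in> {-pi..pi}" and max: "\<And>\<theta>. \<theta> \<in> {-pi..pi} \<Longrightarrow> f (z \<theta>) \<le> f (z \<theta>0)"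
    using continuous_attains_sup[of "{-pi..pi}"] by (metis atLeastAtMost_iff compact_Icc
        empty_iff neg_le_0_iff_le pi_ge_zero)
  have line_on_circle: "w + t *\<^sub>R x = sqrt (1 + t\<^sup>2) *\<^sub>R z (arctan t)" for t
    using add_pos_nonneg[of 1 "t\<^sup>2"] by (simp add: z_def cos_arctan sin_arctan scaleR_add_right)
  have bound: "f (w + t *\<^sub>R x) \<le> f (z \<theta>0)" for t
  proof -
    have "f (w + t *\<^sub>R x) = f (z (arctan t))"
      using add_pos_nonneg[of 1 "t\<^sup>2"] by (simp add: line_on_circle rq_scaleR)
    also have "\<dots> \<le> f (z \<theta>0)"
      using arctan_bounded[of t] by (intro max) auto
    finally show ?thesis .
  qed
  have "cos \<theta>0 \<noteq> 0"
  proof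
    assume "cos \<theta>0 = 0"
    then have "z \<theta>0 = x \<or> z \<theta>0 = - x"
      using sin_cos_squared_add[of \<theta>0] by (auto simp: z_def power2_eq_1_iff)
    then have "f (z \<theta>0) = f x"
      using rq_scaleR[of "- 1" A B x] by auto
    moreover have "s \<noteq> 0"
      using s by auto
    then have "f (x + s *\<^sub>R w) = f (w + (1 / s) *\<^sub>R x)"
      using rq_scaleR[of s A B "w + (1 / s) *\<^sub>R x"] by (simp add: scaleR_add_right add.commute)
    ultimately show False
      using s bound[of "1 / s"] by simp
  qed
  then have "w + tan \<theta>0 *\<^sub>R x = (1 / cos \<theta>0) *\<^sub>R z \<theta>0"
    by (simp add: z_def tan_def scaleR_add_right)
  then have "w + tan \<theta>0 *\<^sub>R x \<noteq> 0" and "f (w + tan \<theta>0 *\<^sub>R x) = f (z \<theta>0)"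
    using \<open>cos \<theta>0 \<noteq> 0\<close> z_nonzero[of \<theta>0] by (simp_all add: rq_scaleR)
  then have "is_line_max A B w x (tan \<theta>0)"
    using bound by (simp add: is_line_max_def)
  then show ?thesis ..
qed

lemma line_max_ge_start:
  assumes "w \<noteq> 0" and "is_line_max A B w x t"
  shows "f w \<le> f (w + t *\<^sub>R x)"
  using assms unfolding is_line_max_def by (metis add_0_right scale_zero_left)

lemma line_max_ge_direction:
  assumes x: "x \<noteq> 0" and max: "is_line_max A B w x t"
  shows "f x \<le> f (w + t *\<^sub>R x)"
proof (rule tendsto_upperbound)
  have lim: "((\<lambda>s. x + inverse s *\<^sub>R w) \<longlongrightarrow> x) at_top"
    using tendsto_add[OF tendsto_const tendsto_scaleR[OF tendsto_inverse_0_at_top[OF filterlim_ident]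
        tendsto_const]] by simp
  then show "((\<lambda>s. f (x + inverse s *\<^sub>R w)) \<longlongrightarrow> f x) at_top"
    using isCont_tendsto_compose[OF isCont_rq[OF x]] by blast
  have "\<forall>\<^sub>F s in at_top. 0 < s \<and> x + inverse s *\<^sub>R w \<noteq> 0"
    using eventually_gt_at_top tendsto_imp_eventually_ne[OF lim x] by (rule eventually_conj)
  then show "\<forall>\<^sub>F s in at_top. f (x + inverse s *\<^sub>R w) \<le> f (w + t *\<^sub>R x)"
  proof (rule eventually_mono, clarify)
    fix s :: real
    assume "0 < s" and nonzero: "x + inverse s *\<^sub>R w \<noteq> 0"
    then have eq: "x + inverse s *\<^sub>R w = inverse s *\<^sub>R (w + s *\<^sub>R x)"
      by (simp add: scaleR_add_right add.commute)
    then have "w + s *\<^sub>R x \<noteq> 0"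
      using nonzero by auto
    then show "f (x + inverse s *\<^sub>R w) \<le> f (w + t *\<^sub>R x)"
      using max \<open>0 < s\<close> by (simp add: eq rq_scaleR is_line_max_def)
  qed
qed simp

section \<open>Total families of residuals\<close>

lemma residual_inner_along_line:
  fixes t :: real and h w :: "real^'n"
  assumes e: "e \<in> geneig_space A B c"
  defines "y \<equiv> e + t *\<^sub>R h"
  shows "(residual y \<bullet> w) * (norm (B *v y))\<^sup>2 =
    t * (pencil_form c h w * (norm (B *v y))\<^sup>2 - t * pencil_form c h h * ((B *v y) \<bullet> (B *v w)))"
proof -
  have e0: "pencil_form c e z = 0" for z
    using e by (simp add: geneig_space_iff)
  define N where "N = (norm (B *v y))\<^sup>2"
  define D where "D = (B *v y) \<bullet> (B *v w)"
  have residual_y: "residual y \<bullet> w = t * pencil_form c h w + (c - f y) * D"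
    using pencil_form_change[of "f y" y w c]
    by (simp add: residual_inner y_def D_def pencil_form_add_scaleR e0)
  have "(c - f y) * N = - pencil_form c y y"
    by (simp add: N_def pencil_form_diag algebra_simps)
  also have "pencil_form c y y = t\<^sup>2 * pencil_form c h h"
    by (simp add: y_def pencil_form_quadratic e0)
  finally have decrease: "(c - f y) * N = - (t\<^sup>2 * pencil_form c h h)" .
  have "(residual y \<bullet> w) * N = t * pencil_form c h w * N + D * ((c - f y) * N)"
    by (simp add: residual_y algebra_simps)
  also have "\<dots> = t * pencil_form c h w * N - t\<^sup>2 * pencil_form c h h * D"
    by (simp add: decrease)
  finally show ?thesis
    by (simp add: N_def D_def power2_eq_square algebra_simps)
qed

lemma eventually_rq_greater_along_line:
  assumes "e \<noteq> 0" and "c < f e"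
  shows "\<forall>\<^sub>F t in at 0. c < f (e + t *\<^sub>R h)"
proof -
  have "((\<lambda>t. e + t *\<^sub>R h) \<longlongrightarrow> e + 0 *\<^sub>R h) (at 0)"
    by (intro tendsto_intros)
  then have "((\<lambda>t. f (e + t *\<^sub>R h)) \<longlongrightarrow> f e) (at 0)"
    using isCont_tendsto_compose[OF isCont_rq[OF assms(1)]] by simp
  then show ?thesis
    using assms(2) by (rule order_tendstoD)
qed

lemma residual_witness:
  assumes c: "c < lambda1 A B" and w: "w \<noteq> 0" and u: "u \<noteq> 0" "f u < lambda1 A B"
  shows "\<exists>y. norm y = 1 \<and> c < f y \<and> residual y \<bullet> w \<noteq> 0"
proof -
  txt \<open>Move away from a \<open>\<lambda>\<^sub>1\<close>-eigenvector e along h: the residual is of first order in t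
    if \<open>pencil_form \<lambda>\<^sub>1 h w \<noteq> 0\<close>; if w itself is an eigenvector, take \<open>e = w\<close>, \<open>h = u\<close>
    and use the second order term, which is nonzero because \<open>f u < \<lambda>\<^sub>1\<close>.\<close>
  obtain e h where e: "e \<in> geneig_space A B (lambda1 A B)"
    and witness: "\<forall>\<^sub>F t in at 0. residual (e + t *\<^sub>R h) \<bullet> w \<noteq> 0"
  proof (cases "w \<in> geneig_space A B (lambda1 A B)")
    case True
    have uw: "pencil_form (lambda1 A B) u w = 0"
      using True by (simp add: geneig_space_iff pencil_form_commute)
    have uu: "pencil_form (lambda1 A B) u u < 0"
      using u mult_B_nonzero[OF u(1)] by (simp add: pencil_form_diag mult_neg_pos)
    have "((\<lambda>t. (B *v (w + t *\<^sub>R u)) \<bullet> (B *v w)) \<longlongrightarrow> (B *v w) \<bullet> (B *v w)) (at 0)"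
      by (intro tendsto_intros tendsto_matrix_vector_mult_line)
    then have "\<forall>\<^sub>F t in at 0. (B *v (w + t *\<^sub>R u)) \<bullet> (B *v w) \<noteq> 0"
      using mult_B_nonzero[OF w] by (simp add: tendsto_imp_eventually_ne)
    with eventually_neq_at_within[of 0 0 UNIV]
    have "\<forall>\<^sub>F t in at 0. residual (w + t *\<^sub>R u) \<bullet> w \<noteq> 0"
    proof eventually_elim
      case (elim t)
      then show ?case
        using residual_inner_along_line[OF True, of t u w] uw uu by auto
    qed
    with True show ?thesis
      by (rule that)
  next
    case False
    obtain e where e: "e \<in> geneig_space A B (lambda1 A B)"
      using ex_geneig_lambda1 by blast
    obtain h where h: "pencil_form (lambda1 A B) h w \<noteq> 0"
      using False w by (auto simp: geneig_space_iff pencil_form_commute)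
    define \<psi> where "\<psi> t = pencil_form (lambda1 A B) h w * (norm (B *v (e + t *\<^sub>R h)))\<^sup>2 -
      t * pencil_form (lambda1 A B) h h * ((B *v (e + t *\<^sub>R h)) \<bullet> (B *v w))" for t
    have "(\<psi> \<longlongrightarrow> pencil_form (lambda1 A B) h w * (norm (B *v e))\<^sup>2 -
        0 * pencil_form (lambda1 A B) h h * ((B *v e) \<bullet> (B *v w))) (at 0)"
      unfolding \<psi>_def by (intro tendsto_intros tendsto_matrix_vector_mult_line)
    moreover have "pencil_form (lambda1 A B) h w * (norm (B *v e))\<^sup>2 \<noteq> 0"
      using h mult_B_nonzero e by (auto simp: geneig_space_iff)
    ultimately have "\<forall>\<^sub>F t in at 0. \<psi> t \<noteq> 0"
      by (simp add: tendsto_imp_eventually_ne)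
    with eventually_neq_at_within[of 0 0 UNIV]
    have "\<forall>\<^sub>F t in at 0. residual (e + t *\<^sub>R h) \<bullet> w \<noteq> 0"
    proof eventually_elim
      case (elim t)
      then show ?case
        using residual_inner_along_line[OF e, of t h w] by (auto simp: \<psi>_def)
    qed
    with e show ?thesis
      by (rule that)
  qed
  moreover have "\<forall>\<^sub>F t in at 0. c < f (e + t *\<^sub>R h)"
    using e c by (intro eventually_rq_greater_along_line) (auto simp: geneig_lambda1_iff)
  ultimately obtain t where t: "c < f (e + t *\<^sub>R h)" "residual (e + t *\<^sub>R h) \<bullet> w \<noteq> 0"
    using eventually_happens'[OF at_neq_bot eventually_conj] by blast
  then have "e + t *\<^sub>R h \<noteq> 0"
    by auto
  with t show ?thesis
    by (intro exI[of _ "(e + t *\<^sub>R h) /\<^sub>R norm (e + t *\<^sub>R h)"]) (simp add: rq_scaleR residual_scaleR)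
qed

end

definition total_family :: "nat \<Rightarrow> (nat \<Rightarrow> 'a::real_inner) \<Rightarrow> bool" where
  "total_family K a \<longleftrightarrow> (\<forall>w. (\<forall>i<K. a i \<bullet> w = 0) \<longrightarrow> w = 0)"

lemma ex_total_family:
  fixes r :: "'a \<Rightarrow> 'b::euclidean_space"
  assumes "\<And>w. w \<noteq> 0 \<Longrightarrow> \<exists>y\<in>W. r y \<bullet> w \<noteq> 0"
  shows "\<exists>K Y. (\<forall>i<K. Y i \<in> W) \<and> total_family K (\<lambda>i. r (Y i))"
proof -
  obtain S where S: "S \<subseteq> r ` W" "independent S" "r ` W \<subseteq> span S"
    using basis_exists by metis
  obtain bs where bs: "set bs = S"
    using finite_list[OF eucl.finiteI_independent[OF S(2)]] by blast
  obtain y where y: "\<And>b. b \<in> S \<Longrightarrow> y b \<in> W \<and> r (y b) = b"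
    using S(1) by (metis f_inv_into_f inv_into_into subsetD)
  define Y where "Y i = y (bs ! i)" for i
  have "w = 0" if orth: "\<forall>i<length bs. r (Y i) \<bullet> w = 0" for w
  proof (rule ccontr)
    assume "w \<noteq> 0"
    then obtain z where z: "z \<in> W" "r z \<bullet> w \<noteq> 0"
      using assms by blast
    have "orthogonal w b" if "b \<in> S" for b
    proof -
      obtain i where "i < length bs" "b = bs ! i"
        using \<open>b \<in> S\<close> bs by (auto simp: in_set_conv_nth)
      moreover have "r (Y i) = b"
        using y[OF \<open>b \<in> S\<close>] \<open>b = bs ! i\<close> by (simp add: Y_def)
      ultimately show ?thesis
        using orth by (auto simp: orthogonal_def inner_commute)
    qed
    then have "orthogonal w (r z)"
      using S(3) z(1) by (auto intro: orthogonal_to_span)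
    with z(2) show False
      by (simp add: orthogonal_def inner_commute)
  qed
  moreover have "Y i \<in> W" if "i < length bs" for i
    using that y bs by (auto simp: Y_def)
  ultimately show ?thesis
    unfolding total_family_def by blast
qed

lemma total_family_margin:
  fixes a :: "nat \<Rightarrow> 'a::euclidean_space"
  assumes "total_family K a"
  shows "\<exists>m>0. \<forall>w. m * norm w \<le> (\<Sum>i<K. \<bar>a i \<bullet> w\<bar>)"
proof -
  have "continuous_on (sphere 0 1) (\<lambda>w. \<Sum>i<K. \<bar>a i \<bullet> w\<bar>)"
    by (intro continuous_intros)
  moreover have "sphere (0::'a) 1 \<noteq> {}"
    by (simp add: sphere_eq_empty)
  ultimately obtain w0 where w0: "w0 \<in> sphere 0 1"
    and min: "\<And>w. w \<in> sphere 0 1 \<Longrightarrow> (\<Sum>i<K. \<bar>a i \<bullet> w0\<bar>) \<le> (\<Sum>i<K. \<bar>a i \<bullet> w\<bar>)"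
    using continuous_attains_inf[OF compact_sphere] by blast
  define m where "m = (\<Sum>i<K. \<bar>a i \<bullet> w0\<bar>)"
  have "m \<noteq> 0"
    using assms w0 by (auto simp: m_def total_family_def sum_nonneg_eq_0_iff)
  then have "0 < m"
    by (simp add: m_def order_le_neq_trans sum_nonneg)
  moreover have "m * norm w \<le> (\<Sum>i<K. \<bar>a i \<bullet> w\<bar>)" for w
  proof (cases "w = 0")
    case False
    then have "m \<le> (\<Sum>i<K. \<bar>a i \<bullet> (w /\<^sub>R norm w)\<bar>)"
      unfolding m_def by (intro min) simp
    also have "\<dots> = (\<Sum>i<K. \<bar>a i \<bullet> w\<bar>) / norm w"
      by (simp add: sum_divide_distrib abs_mult divide_inverse_commute sum_distrib_left)
    finally show ?thesis
      using False by (simp add: pos_le_divide_eq)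
  qed simp
  ultimately show ?thesis
    by blast
qed

lemma total_family_perturb:
  fixes a :: "nat \<Rightarrow> 'a::euclidean_space"
  assumes "total_family K a"
  shows "\<exists>\<epsilon>>0. \<forall>b. (\<forall>i<K. dist (b i) (a i) < \<epsilon>) \<longrightarrow> total_family K b"
proof -
  obtain m where m: "0 < m" "\<And>w. m * norm w \<le> (\<Sum>i<K. \<bar>a i \<bullet> w\<bar>)"
    using total_family_margin[OF assms] by blast
  define \<epsilon> where "\<epsilon> = m / (K + 1)"
  have "total_family K b" if close: "\<forall>i<K. dist (b i) (a i) < \<epsilon>" for b
    unfolding total_family_def
  proof (intro allI impI)
    fix w
    assume orth: "\<forall>i<K. b i \<bullet> w = 0"
    have "m * norm w \<le> (\<Sum>i<K. \<bar>(a i - b i) \<bullet> w\<bar>)"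
      using m(2)[of w] orth by (simp add: inner_diff_left)
    also have "\<dots> \<le> (\<Sum>i<K. \<epsilon> * norm w)"
    proof (rule sum_mono)
      fix i
      assume "i \<in> {..<K}"
      then have "norm (a i - b i) \<le> \<epsilon>"
        using close by (simp add: dist_norm norm_minus_commute less_imp_le)
      have "\<bar>(a i - b i) \<bullet> w\<bar> \<le> norm (a i - b i) * norm w"
        by (rule Cauchy_Schwarz_ineq2)
      also have "\<dots> \<le> \<epsilon> * norm w"
        using \<open>norm (a i - b i) \<le> \<epsilon>\<close> by (rule mult_right_mono) simp
      finally show "\<bar>(a i - b i) \<bullet> w\<bar> \<le> \<epsilon> * norm w" .
    qed
    also have "\<dots> = (m * norm w) * (K / (K + 1))"
      by (simp add: \<epsilon>_def)
    finally have "(m * norm w) * (1 - K / (K + 1)) \<le> 0"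
      by (simp add: algebra_simps)
    moreover have "0 < 1 - real K / (K + 1)"
      by (simp add: field_simps)
    ultimately show "w = 0"
      using m(1) by (simp add: mult_le_0_iff)
  qed
  moreover have "0 < \<epsilon>"
    using m(1) by (simp add: \<epsilon>_def)
  ultimately show ?thesis
    by blast
qed

lemma ex_radius_for_family:
  fixes Y :: "nat \<Rightarrow> 'a::metric_space"
  assumes "\<And>i. i < K \<Longrightarrow> \<forall>\<^sub>F z in nhds (Y i). P i z"
  shows "\<exists>\<delta>>0. \<forall>z. (\<forall>i<K. dist (z i) (Y i) < \<delta>) \<longrightarrow> (\<forall>i<K. P i (z i))"
proof -
  have "\<forall>\<^sub>F \<delta> in at_right 0. \<forall>y. dist y (Y i) < \<delta> \<longrightarrow> P i y" if i: "i < K" for i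
  proof -
    obtain d where "0 < d" and d: "\<And>y. dist y (Y i) < d \<Longrightarrow> P i y"
      using assms[OF i] by (auto simp: eventually_nhds_metric)
    have "\<forall>\<^sub>F \<delta> in at_right 0. \<delta> < d"
      using \<open>0 < d\<close> by (intro order_tendstoD(2)[OF tendsto_ident_at])
    then show ?thesis
      by eventually_elim (use d in auto)
  qed
  then have "\<forall>\<^sub>F \<delta> in at_right 0. 0 < \<delta> \<and> (\<forall>i\<in>{..<K}. \<forall>y. dist y (Y i) < \<delta> \<longrightarrow> P i y)"
    by (intro eventually_conj eventually_at_right_less eventually_ball_finite) auto
  then obtain \<delta> :: real where "0 < \<delta>" "\<forall>i\<in>{..<K}. \<forall>y. dist y (Y i) < \<delta> \<longrightarrow> P i y"
    using eventually_happens'[OF trivial_limit_at_right_real] by blast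
  then show ?thesis
    by auto
qed

context rayleigh
begin

lemma ex_stable_total_family:
  assumes "c < lambda1 A B" and "u \<noteq> 0" and "f u < lambda1 A B"
  obtains \<delta> K Y where "0 < \<delta>" and "\<And>i. i < K \<Longrightarrow> norm (Y i) = 1"
    and "\<And>z. \<forall>i<K. dist (z i) (Y i) < \<delta> \<Longrightarrow>
           (\<forall>i<K. c < f (z i)) \<and> total_family K (\<lambda>i. residual (z i))"
proof -
  obtain K Y where Y: "\<forall>i<K. norm (Y i) = 1 \<and> c < f (Y i)"
    and total: "total_family K (\<lambda>i. residual (Y i))"
    using ex_total_family[of "{y. norm y = 1 \<and> c < f y}" residual] residual_witness[OF assms(1) _ assms(2,3)]
    by auto
  obtain \<epsilon> where "0 < \<epsilon>"
    and \<epsilon>: "\<And>b. \<forall>i<K. dist (b i) (residual (Y i)) < \<epsilon> \<Longrightarrow> total_family K b"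
    using total_family_perturb[OF total] by blast
  have "\<forall>\<^sub>F z in nhds (Y i). c < f z \<and> dist (residual z) (residual (Y i)) < \<epsilon>" if "i < K" for i
  proof -
    have "Y i \<noteq> 0"
      using Y that by auto
    then have "(f \<longlongrightarrow> f (Y i)) (nhds (Y i))" "(residual \<longlongrightarrow> residual (Y i)) (nhds (Y i))"
      using isCont_rq isCont_residual by (simp_all add: isCont_def tendsto_at_iff_tendsto_nhds)
    then show ?thesis
      using Y that \<open>0 < \<epsilon>\<close> by (intro eventually_conj order_tendstoD(1) tendstoD) auto
  qed
  then have "\<exists>\<delta>>0. \<forall>z. (\<forall>i<K. dist (z i) (Y i) < \<delta>) \<longrightarrow>
      (\<forall>i<K. c < f (z i) \<and> dist (residual (z i)) (residual (Y i)) < \<epsilon>)"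
    by (rule ex_radius_for_family)
  then obtain \<delta> where "0 < \<delta>" and \<delta>: "\<And>z. \<forall>i<K. dist (z i) (Y i) < \<delta> \<Longrightarrow>
      \<forall>i<K. c < f (z i) \<and> dist (residual (z i)) (residual (Y i)) < \<epsilon>"
    by blast
  show ?thesis
  proof (rule that[OF \<open>0 < \<delta>\<close>])
    show "norm (Y i) = 1" if "i < K" for i
      using Y that by blast
    show "(\<forall>i<K. c < f (z i)) \<and> total_family K (\<lambda>i. residual (z i))"
      if "\<forall>i<K. dist (z i) (Y i) < \<delta>" for z
      using \<delta>[OF that] \<epsilon>[of "\<lambda>i. residual (z i)"] by simp
  qed
qed

end

section \<open>Runs of the iteration\<close>

locale line_search = rayleigh A B for A :: "real^'n^'m" and B :: "real^'n^'l" +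
  fixes v x :: "nat \<Rightarrow> real^'n" and \<tau> :: "nat \<Rightarrow> real"
  assumes \<tau>_max: "\<And>k. (\<exists>t. is_line_max A B (v k) (x k) t) \<Longrightarrow> is_line_max A B (v k) (x k) (\<tau> k)"
    and \<tau>_none: "\<And>k. \<not> (\<exists>t. is_line_max A B (v k) (x k) t) \<Longrightarrow> \<tau> k = 0"
    and v_Suc: "\<And>k. v (Suc k) = (v k + \<tau> k *\<^sub>R x k) /\<^sub>R norm (v k + \<tau> k *\<^sub>R x k)"
    and norm_v_0: "norm (v 0) = 1"
begin

lemma norm_v: "norm (v k) = 1"
proof (induction k)
  case (Suc k)
  show ?case
  proof (cases "\<exists>t. is_line_max A B (v k) (x k) t")
    case True
    then show ?thesis
      using \<tau>_max[OF True] by (simp add: v_Suc is_line_max_def)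
  next
    case False
    then show ?thesis
      using \<tau>_none[OF False] Suc by (simp add: v_Suc)
  qed
qed (rule norm_v_0)

lemma rq_v_Suc:
  assumes "\<exists>t. is_line_max A B (v k) (x k) t"
  shows "f (v k) \<le> f (v (Suc k))" and "x k \<noteq> 0 \<Longrightarrow> f (x k) \<le> f (v (Suc k))"
proof -
  have max: "is_line_max A B (v k) (x k) (\<tau> k)"
    using \<tau>_max[OF assms] .
  then have "f (v (Suc k)) = f (v k + \<tau> k *\<^sub>R x k)"
    by (simp add: v_Suc rq_scaleR is_line_max_def)
  then show "f (v k) \<le> f (v (Suc k))" and "x k \<noteq> 0 \<Longrightarrow> f (x k) \<le> f (v (Suc k))"
    using line_max_ge_start[OF _ max] line_max_ge_direction[OF _ max] norm_v[of k] by fastforce+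
qed

lemma mono_rq_v: "mono (\<lambda>k. f (v k))"
proof (rule incseq_SucI)
  fix k
  show "f (v k) \<le> f (v (Suc k))"
  proof (cases "\<exists>t. is_line_max A B (v k) (x k) t")
    case False
    then show ?thesis
      using \<tau>_none[OF False] norm_v[of k] by (simp add: v_Suc)
  qed (rule rq_v_Suc(1))
qed

lemma step_below_level:
  assumes "c < f (x k)" and "f (v (Suc k)) \<le> c"
  shows "v (Suc k) = v k" and "residual (x k) \<bullet> v k = 0"
proof -
  have no_gain: "\<not> (\<exists>t. is_line_max A B (v k) (x k) t)" if "x k \<noteq> 0"
    using rq_v_Suc(2) assms that by force
  show "residual (x k) \<bullet> v k = 0"
    using no_gain line_max_exists by fastforce
  show "v (Suc k) = v k"
  proof (cases "x k = 0")
    case True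
    then show ?thesis
      using norm_v[of k] by (simp add: v_Suc)
  next
    case False
    then show ?thesis
      using \<tau>_none[OF no_gain[OF False]] norm_v[of k] by (simp add: v_Suc)
  qed
qed

lemma exceeds_level:
  assumes above: "\<forall>i<K. c < f (x (k0 + i))" and total: "total_family K (\<lambda>i. residual (x (k0 + i)))"
  shows "\<exists>k. c < f (v k)"
proof (rule ccontr)
  assume "\<not> ?thesis"
  then have below: "f (v k) \<le> c" for k
    by (simp add: not_less)
  have stays: "v (k0 + i) = v k0" if "i \<le> K" for i
    using that
  proof (induction i)
    case (Suc i)
    then show ?case
      using step_below_level(1)[of c "k0 + i"] above below by simp
  qed simp
  have "residual (x (k0 + i)) \<bullet> v k0 = 0" if "i < K" for i
    using step_below_level(2)[of c "k0 + i"] stays[of i] above below that by simp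
  then have "v k0 = 0"
    using total by (simp add: total_family_def)
  then show False
    using norm_v[of k0] by simp
qed

lemma rq_v_tendsto_lambda1:
  assumes "\<forall>c < lambda1 A B. \<exists>k. c < f (v k)"
  shows "(\<lambda>k. f (v k)) \<longlonglongrightarrow> lambda1 A B"
proof (rule order_tendstoI)
  fix c
  assume "c < lambda1 A B"
  then obtain k0 where "c < f (v k0)"
    using assms by blast
  then show "\<forall>\<^sub>F k in sequentially. c < f (v k)"
    using mono_rq_v unfolding eventually_sequentially mono_def by (meson less_le_trans)
next
  fix c
  assume "lambda1 A B < c"
  then show "\<forall>\<^sub>F k in sequentially. f (v k) < c"
    using rq_le_lambda1 by (intro always_eventually allI) (meson le_less_trans)
qed

end

section \<open>Independent blocks of random directions\<close>

lemma (in prob_space) indep_sets_reindex: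
  assumes inj: "inj_on h I" and indep: "indep_sets F (h ` I)"
  shows "indep_sets (\<lambda>i. F (h i)) I"
proof (rule indep_setsI)
  show "F (h i) \<subseteq> events" if "i \<in> I" for i
    using indep that by (simp add: indep_sets_def)
  fix A J
  assume J: "J \<noteq> {}" "J \<subseteq> I" "finite J" "\<forall>j\<in>J. A j \<in> F (h j)"
  have inj_J: "inj_on h J"
    using inj J(2) by (rule inj_on_subset)
  have "prob (\<Inter>k\<in>h ` J. A (the_inv_into J h k)) = (\<Prod>k\<in>h ` J. prob (A (the_inv_into J h k)))"
    using J inj_J by (intro indep_setsD[OF indep]) (auto simp: the_inv_into_f_f)
  then show "prob (\<Inter>j\<in>J. A j) = (\<Prod>j\<in>J. prob (A j))"
    by (simp add: prod.reindex[OF inj_J] the_inv_into_f_f[OF inj_J])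
qed

lemma (in prob_space) indep_vars_reindex:
  assumes "inj_on h I" and "indep_vars N X (h ` I)"
  shows "indep_vars (\<lambda>i. N (h i)) (\<lambda>i. X (h i)) I"
  using assms indep_sets_reindex[OF assms(1),
      of "\<lambda>i. sigma_sets (space M) {X i -` A \<inter> space M |A. A \<in> sets (N i)}"]
  by (simp add: indep_vars_def)

lemma (in prob_space) indep_events_blocks:
  fixes E :: "nat \<Rightarrow> 'a set" and K :: nat
  assumes indep: "indep_events E UNIV" and "0 < K"
  shows "indep_events (\<lambda>j. \<Inter>i<K. E (j * K + i)) UNIV"
proof -
  define I where "I j = (\<lambda>i. j * K + i) ` {..<K}" for j
  have block: "(\<Inter>i<K. E (j * K + i)) = (\<Inter>k\<in>I j. E k)" for j
    by (simp add: I_def)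
  have "disjoint_family_on I UNIV"
    unfolding disjoint_family_on_def
  proof (intro ballI impI)
    fix j j' :: nat
    assume "j \<noteq> j'"
    have "k div K = j" if "k \<in> I j" for k j
      using that \<open>0 < K\<close> by (auto simp: I_def)
    with \<open>j \<noteq> j'\<close> show "I j \<inter> I j' = {}"
      by blast
  qed
  moreover have "indep_sets (\<lambda>k. {E k}) (\<Union>j. I j)"
    using indep unfolding indep_events_def_alt by (rule indep_sets_mono_index[rotated]) simp
  ultimately have "indep_sets (\<lambda>j. sigma_sets (space M) (\<Union>k\<in>I j. {E k})) UNIV"
    by (intro indep_sets_collect_sigma) (auto simp: Int_stable_def)
  then show ?thesis
    unfolding indep_events_def_alt block
  proof (rule indep_sets_mono_sets)
    fix j
    have "E ` I j \<subseteq> events"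
      using indep by (auto simp: indep_events_def)
    then have "(\<Inter>k\<in>I j. E k) \<in> sigma_sets (space M) (\<Union>k\<in>I j. {E k})"
      using \<open>0 < K\<close> sets.sets_into_space
      by (intro sigma_sets_INTER) (auto simp: I_def intro: sigma_sets.Basic)
    then show "{\<Inter>k\<in>I j. E k} \<subseteq> sigma_sets (space M) (\<Union>k\<in>I j. {E k})"
      by simp
  qed
qed

lemma (in prob_space) AE_ex_mem_indep_events:
  fixes F :: "nat \<Rightarrow> 'a set"
  assumes indep: "indep_events F UNIV" and "0 < p" and p: "\<And>j. p \<le> prob (F j)"
  shows "AE \<omega> in M. \<exists>j. \<omega> \<in> F j"
proof -
  have events: "F j \<in> events" for j
    using indep by (auto simp: indep_events_def)
  have compl_indep: "indep_sets (\<lambda>j. sigma_sets (space M) {F j}) UNIV"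
    using indep unfolding indep_events_def_alt by (rule indep_sets_sigma) (simp add: Int_stable_def)
  define N where "N = (\<Inter>j. space M - F j)"
  have N_events: "N \<in> events"
    using events by (auto simp: N_def)
  have "prob N \<le> (1 - p) ^ Suc n" for n
  proof -
    have "prob N \<le> prob (\<Inter>j\<le>n. space M - F j)"
      using events by (intro finite_measure_mono) (auto simp: N_def)
    also have "\<dots> = (\<Prod>j\<le>n. prob (space M - F j))"
      by (intro indep_setsD[OF compl_indep]) (auto intro: sigma_sets.Compl sigma_sets.Basic)
    also have "\<dots> \<le> (\<Prod>j\<le>n. 1 - p)"
      using p events by (intro prod_mono) (simp add: prob_compl)
    finally show ?thesis
      by simp
  qed
  moreover have "p \<le> 1"
    using p[of 0] prob_le_1[of "F 0"] by linarith
  with \<open>0 < p\<close> have "\<bar>1 - p\<bar> < 1"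
    by simp
  then have "(\<lambda>n. (1 - p) ^ Suc n) \<longlonglongrightarrow> 0"
    by (intro LIMSEQ_Suc LIMSEQ_power_zero) simp
  ultimately have "prob N \<le> 0"
    using LIMSEQ_le_const by blast
  then have "N \<in> null_sets M"
    using N_events measure_nonneg[of M N] by (simp add: emeasure_eq_measure null_sets_def)
  from AE_not_in[OF this] AE_space show ?thesis
    by eventually_elim (auto simp: N_def)
qed

lemma (in prob_space) AE_ex_block_hits:
  fixes X :: "nat \<Rightarrow> 'a \<Rightarrow> 'b" and K :: nat and S :: "nat \<Rightarrow> 'b set"
  assumes indep: "indep_vars (\<lambda>_. N) X UNIV" and distr: "\<And>k. distr M N (X k) = D"
    and S: "\<And>i. i < K \<Longrightarrow> S i \<in> sets N"
    and pos: "\<And>i. i < K \<Longrightarrow> 0 < emeasure D (S i)"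
  shows "AE \<omega> in M. \<exists>j. \<forall>i<K. X (j * K + i) \<omega> \<in> S i"
proof (cases "K = 0")
  case False
  then have "0 < K"
    by simp
  define E where "E k = {\<omega> \<in> space M. X k \<omega> \<in> S (k mod K)}" for k :: nat
  have X: "X k \<in> measurable M N" for k
    using indep by (simp add: indep_vars_def)
  have S_mod: "S (k mod K) \<in> sets N" for k
    using S \<open>0 < K\<close> by simp
  have "indep_events E UNIV"
    unfolding E_def using S_mod sets.sets_into_space
    by (intro indep_eventsI_indep_vars[OF indep]) (simp add: Int_absorb1)
  then have "indep_events (\<lambda>j. \<Inter>i<K. E (j * K + i)) UNIV"
    using \<open>0 < K\<close> by (rule indep_events_blocks)
  moreover define p where "p = (\<Prod>i<K. measure D (S i))"
  have "prob (\<Inter>i<K. E (j * K + i)) = p" for j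
  proof -
    have inj: "inj_on (\<lambda>i. j * K + i) {..<K}"
      by (simp add: inj_on_def)
    have "prob (\<Inter>k\<in>(\<lambda>i. j * K + i) ` {..<K}. E k) = (\<Prod>k\<in>(\<lambda>i. j * K + i) ` {..<K}. prob (E k))"
      using \<open>indep_events E UNIV\<close> \<open>0 < K\<close> unfolding indep_events_def_alt
      by (intro indep_setsD) auto
    then have "prob (\<Inter>i<K. E (j * K + i)) = (\<Prod>k\<in>(\<lambda>i. j * K + i) ` {..<K}. prob (E k))"
      by (simp add: image_image)
    also have "\<dots> = (\<Prod>i<K. prob (E (j * K + i)))"
      by (simp add: prod.reindex[OF inj])
    also have "\<dots> = p"
      unfolding p_def
    proof (rule prod.cong)
      fix i
      assume "i \<in> {..<K}"
      then have "E (j * K + i) = X (j * K + i) -` S i \<inter> space M"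
        by (auto simp: E_def)
      then show "prob (E (j * K + i)) = measure D (S i)"
        using \<open>i \<in> {..<K}\<close> S by (simp add: measure_distr[OF X, symmetric] distr)
    qed simp
    finally show ?thesis .
  qed
  moreover have "0 < p"
  proof -
    interpret D: prob_space D
      using prob_space_distr[OF X[of 0]] by (simp add: distr)
    show ?thesis
      unfolding p_def using pos by (intro prod_pos) (simp add: D.emeasure_eq_measure)
  qed
  ultimately have "AE \<omega> in M. \<exists>j. \<omega> \<in> (\<Inter>i<K. E (j * K + i))"
    by (intro AE_ex_mem_indep_events) auto
  then show ?thesis
    by eventually_elim (auto simp: E_def)
qed simp

lemma uniform_sphere_ball_pos:
  fixes y :: "real^'n"
  assumes y: "norm y = 1" and "0 < \<delta>"
  shows "0 < emeasure uniform_sphere (ball y \<delta>)"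
proof -
  define N where "N z = z /\<^sub>R norm z" for z :: "real^'n"
  define P where "P = ball 0 1 \<inter> N -` ball y \<delta>"
  have N_meas: "N \<in> borel_measurable borel"
    unfolding N_def by measurable
  have "emeasure uniform_sphere (ball y \<delta>) = emeasure lborel P / emeasure lborel (ball (0::real^'n) 1)"
    unfolding uniform_sphere_def N_def[symmetric] P_def
    using N_meas by (simp add: emeasure_distr measurable_sets_borel Int_commute)
  moreover have "0 < emeasure lborel P"
  proof -
    have "open (ball 0 1 \<inter> (N -` ball y \<delta> \<inter> - {0}))"
    proof -
      have "continuous_on (- {0}) N"
        unfolding N_def by (intro continuous_intros) auto
      then show ?thesis
        by (intro open_Int open_ball continuous_on_open_vimage[THEN iffD1, rule_format]) auto
    qed
    moreover have "(1 / 2) *\<^sub>R y \<in> ball 0 1 \<inter> (N -` ball y \<delta> \<inter> - {0})"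
      using y \<open>0 < \<delta>\<close> by (auto simp: N_def)
    ultimately obtain r where "0 < r" and r: "ball ((1 / 2) *\<^sub>R y) r \<subseteq> ball 0 1 \<inter> (N -` ball y \<delta> \<inter> - {0})"
      by (meson open_contains_ball)
    have "0 < emeasure lborel (ball ((1 / 2) *\<^sub>R y) r)"
      using \<open>0 < r\<close> by (simp add: emeasure_ball unit_ball_vol_pos)
    also have "\<dots> \<le> emeasure lborel P"
      using r N_meas by (intro emeasure_mono) (auto simp: P_def measurable_sets_borel)
    finally show ?thesis .
  qed
  ultimately show ?thesis
    using emeasure_lborel_ball_finite[of "0::real^'n" 1] by (simp add: ennreal_zero_less_divide)
qed

lemma std_gaussian_AE_nonzero: "AE z in std_gaussian. z \<noteq> 0"
proof -
  have "AE z in lborel. z \<noteq> (0::real^'n)"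
    by (rule AE_lborel_singleton)
  then show ?thesis
    unfolding std_gaussian_def by (subst AE_density) (auto elim!: eventually_mono)
qed

section \<open>Algorithm U\<close>

locale algorithm_U = rayleigh A B + prob_space M
  for A :: "real^'n^'m" and B :: "real^'n^'l" and M :: "'w measure" +
  fixes g :: "'w \<Rightarrow> real^'n" and x :: "nat \<Rightarrow> 'w \<Rightarrow> real^'n"
    and \<tau> :: "nat \<Rightarrow> 'w \<Rightarrow> real" and v :: "nat \<Rightarrow> 'w \<Rightarrow> real^'n"
  assumes g_rv: "g \<in> borel_measurable M"
    and g_dist: "distr M borel g = std_gaussian"
    and x_dist: "\<And>k. distr M borel (x k) = uniform_sphere"
    and indep: "indep_vars (\<lambda>_. borel) (\<lambda>i. case i of None \<Rightarrow> g | Some k \<Rightarrow> x k) UNIV"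
    and \<tau>_max: "\<And>k \<omega>. (\<exists>t. is_line_max A B (v k \<omega>) (x k \<omega>) t) \<Longrightarrow>
                         is_line_max A B (v k \<omega>) (x k \<omega>) (\<tau> k \<omega>)"
    and \<tau>_none: "\<And>k \<omega>. \<not> (\<exists>t. is_line_max A B (v k \<omega>) (x k \<omega>) t) \<Longrightarrow> \<tau> k \<omega> = 0"
    and v_0: "\<And>\<omega>. v 0 \<omega> = g \<omega> /\<^sub>R norm (g \<omega>)"
    and v_Suc: "\<And>k \<omega>. v (Suc k) \<omega> =
                 (v k \<omega> + \<tau> k \<omega> *\<^sub>R x k \<omega>) /\<^sub>R norm (v k \<omega> + \<tau> k \<omega> *\<^sub>R x k \<omega>)"
begin

lemma AE_g_nonzero: "AE \<omega> in M. g \<omega> \<noteq> 0"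
proof -
  have "AE z in distr M borel g. z \<noteq> 0"
    unfolding g_dist by (rule std_gaussian_AE_nonzero)
  then show ?thesis
    by (subst (asm) AE_distr_iff[OF g_rv]) auto
qed

lemma indep_x: "indep_vars (\<lambda>_. borel) x UNIV"
  using indep_vars_reindex[of Some UNIV, OF _ indep_vars_subset[OF indep]] by simp

lemma line_search_run:
  assumes "g \<omega> \<noteq> 0"
  shows "line_search A B (\<lambda>k. v k \<omega>) (\<lambda>k. x k \<omega>) (\<lambda>k. \<tau> k \<omega>)"
  by unfold_locales (use assms \<tau>_max \<tau>_none v_Suc in \<open>auto simp: v_0\<close>)

lemma AE_exceeds:
  assumes "c < lambda1 A B"
  shows "AE \<omega> in M. \<exists>k. c < f (v k \<omega>)"
proof (cases "\<exists>u. u \<noteq> 0 \<and> f u < lambda1 A B")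
  case False
  from AE_g_nonzero show ?thesis
  proof eventually_elim
    case (elim \<omega>)
    then have "v 0 \<omega> \<noteq> 0"
      by (simp add: v_0)
    then have "f (v 0 \<omega>) = lambda1 A B"
      using False rq_le_lambda1[of "v 0 \<omega>"] by fastforce
    with assms show ?case
      by (intro exI[of _ 0]) simp
  qed
next
  case True
  then obtain u where u: "u \<noteq> 0" "f u < lambda1 A B"
    by blast
  obtain \<delta> K Y where "0 < \<delta>" and Y: "\<And>i. i < K \<Longrightarrow> norm (Y i) = 1"
    and stable: "\<And>z. \<forall>i<K. dist (z i) (Y i) < \<delta> \<Longrightarrow>
                   (\<forall>i<K. c < f (z i)) \<and> total_family K (\<lambda>i. residual (z i))"
    using ex_stable_total_family[OF assms u] by blast
  have "AE \<omega> in M. \<exists>j. \<forall>i<K. x (j * K + i) \<omega> \<in> ball (Y i) \<delta>"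
    using Y \<open>0 < \<delta>\<close> by (intro AE_ex_block_hits[OF indep_x x_dist] uniform_sphere_ball_pos) auto
  with AE_g_nonzero show ?thesis
  proof eventually_elim
    case (elim \<omega>)
    interpret run: line_search A B "\<lambda>k. v k \<omega>" "\<lambda>k. x k \<omega>" "\<lambda>k. \<tau> k \<omega>"
      using line_search_run elim(1) .
    obtain j where "\<forall>i<K. dist (x (j * K + i) \<omega>) (Y i) < \<delta>"
      using elim(2) by (auto simp: dist_commute)
    then show ?case
      using stable[of "\<lambda>i. x (j * K + i) \<omega>"] by (intro run.exceeds_level[of K c "j * K"]) auto
  qed
qed

lemma AE_converges:
  "AE \<omega> in M. mono (\<lambda>k. f (v k \<omega>)) \<and> (\<lambda>k. f (v k \<omega>)) \<longlonglongrightarrow> lambda1 A B \<and>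
     (\<lambda>k. infdist (v k \<omega>) (geneig_space A B (lambda1 A B))) \<longlonglongrightarrow> 0"
proof -
  have "AE \<omega> in M. \<forall>n. \<exists>k. lambda1 A B - inverse (Suc n) < f (v k \<omega>)"
    unfolding AE_all_countable by (intro allI AE_exceeds) simp
  with AE_g_nonzero show ?thesis
  proof eventually_elim
    case (elim \<omega>)
    interpret run: line_search A B "\<lambda>k. v k \<omega>" "\<lambda>k. x k \<omega>" "\<lambda>k. \<tau> k \<omega>"
      using line_search_run elim(1) .
    have exceeds: "\<exists>k. c < f (v k \<omega>)" if "c < lambda1 A B" for c
    proof -
      obtain n where "inverse (Suc n) < lambda1 A B - c"
        using reals_Archimedean[of "lambda1 A B - c"] \<open>c < lambda1 A B\<close> by auto
      moreover obtain k where "lambda1 A B - inverse (Suc n) < f (v k \<omega>)"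
        using elim(2) by blast
      ultimately show ?thesis
        by (intro exI[of _ k]) linarith
    qed
    then have "(\<lambda>k. f (v k \<omega>)) \<longlonglongrightarrow> lambda1 A B"
      by (intro run.rq_v_tendsto_lambda1 allI impI exceeds)
    moreover from this have "(\<lambda>k. infdist (v k \<omega>) (geneig_space A B (lambda1 A B))) \<longlonglongrightarrow> 0"
      by (rule tendsto_infdist_geneig_lambda1[where u = "\<lambda>k. v k \<omega>", OF run.norm_v])
    ultimately show ?case
      using run.mono_rq_v by blast
  qed
qed

end

theorem mainTheorem1:
  fixes A :: "real^'n^'m" and B :: "real^'n^'l"
    and M :: "'w measure"
    and g :: "'w \<Rightarrow> real^'n" and x :: "nat \<Rightarrow> 'w \<Rightarrow> real^'n"
    and \<tau> :: "nat \<Rightarrow> 'w \<Rightarrow> real" and v :: "nat \<Rightarrow> 'w \<Rightarrow> real^'n"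
  assumes d2: "CARD('n) \<ge> 2"
    and kerB: "\<forall>u. B *v u = 0 \<longrightarrow> u = 0"
    and P: "prob_space M"
    and g_rv: "g \<in> borel_measurable M"
    and g_dist: "distr M borel g = std_gaussian"
    and x_rv: "\<And>k. x k \<in> borel_measurable M"
    and x_dist: "\<And>k. distr M borel (x k) = uniform_sphere"
    and indep: "prob_space.indep_vars M (\<lambda>_. borel)
                  (\<lambda>i. case i of None \<Rightarrow> g | Some k \<Rightarrow> x k) UNIV"
    and \<tau>_meas: "\<And>k. \<tau> k \<in> borel_measurable M"
    and \<tau>_max: "\<And>k \<omega>. (\<exists>t. is_line_max A B (v k \<omega>) (x k \<omega>) t) \<Longrightarrow>
                         is_line_max A B (v k \<omega>) (x k \<omega>) (\<tau> k \<omega>)"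
    and \<tau>_none: "\<And>k \<omega>. \<not> (\<exists>t. is_line_max A B (v k \<omega>) (x k \<omega>) t) \<Longrightarrow> \<tau> k \<omega> = 0"
    and v0: "\<And>\<omega>. v 0 \<omega> = g \<omega> /\<^sub>R norm (g \<omega>)"
    and vSuc: "\<And>k \<omega>. v (Suc k) \<omega> =
                 (v k \<omega> + \<tau> k \<omega> *\<^sub>R x k \<omega>) /\<^sub>R norm (v k \<omega> + \<tau> k \<omega> *\<^sub>R x k \<omega>)"
  shows "AE \<omega> in M.
           mono (\<lambda>k. rq A B (v k \<omega>)) \<and>
           (\<lambda>k. rq A B (v k \<omega>)) \<longlonglongrightarrow> lambda1 A B \<and>
           (\<lambda>k. infdist (v k \<omega>) (geneig_space A B (lambda1 A B))) \<longlonglongrightarrow> 0"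
proof -
  interpret algorithm_U A B M g x \<tau> v
    by (intro algorithm_U.intro algorithm_U_axioms.intro rayleigh.intro kerB P)
       (use g_rv g_dist x_dist indep \<tau>_max \<tau>_none v0 vSuc in auto)
  show ?thesis
    by (rule AE_converges)
qed

end
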